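(* A commutative semigroup variety $\mathcal V$ equals $\mathcal C_m$ for some integer $m\ge0$ if and only if $\mathcal V$ is combinatorial and, for all commutative semigroup varieties $\mathcal Y,\mathcal Z$ with $\mathcal Y$ a nil-variety and $\mathcal V=\mathcal Y\vee\mathcal Z$, one has $\mathcal V=\mathcal Z$.
   Context: For $m\ge1$, $\mathcal C_m=\operatorname{var}\{x^m=x^{m+1},\ xy=yx\}$, the variety generated by the cyclic monoid $\langle a\mid a^m=a^{m+1}\rangle$; $\mathcal C_0$ is the trivial variety. A semigroup variety is combinatorial if all groups in it are trivial; it is a nil-variety if all its semigroups are nil-semigroups. Joins are in the lattice of commutative semigroup varieties. *)

theory Defs
  imports Main
begin

datatype trm = Var nat | Mul trm trm

type_synonym ident = "trm \<times> trm"

fun eval :: "('a \<Rightarrow> 'a \<Rightarrow> 'a) \<Rightarrow> (nat \<Rightarrow> 'a) \<Rightarrow> trm \<Rightarrow> 'a" where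
  "eval f \<nu> (Var i) = \<nu> i"
| "eval f \<nu> (Mul s t) = f (eval f \<nu> s) (eval f \<nu> t)"

definition is_csg :: "'a set \<Rightarrow> ('a \<Rightarrow> 'a \<Rightarrow> 'a) \<Rightarrow> bool" where
  "is_csg A f \<longleftrightarrow> A \<noteq> {} \<and> (\<forall>a\<in>A. \<forall>b\<in>A. f a b \<in> A)
     \<and> (\<forall>a\<in>A. \<forall>b\<in>A. \<forall>c\<in>A. f (f a b) c = f a (f b c))
     \<and> (\<forall>a\<in>A. \<forall>b\<in>A. f a b = f b a)"

definition sat :: "'a set \<Rightarrow> ('a \<Rightarrow> 'a \<Rightarrow> 'a) \<Rightarrow> ident \<Rightarrow> bool" where
  "sat A f e \<longleftrightarrow> (\<forall>\<nu>. (\<forall>i. \<nu> i \<in> A) \<longrightarrow> eval f \<nu> (fst e) = eval f \<nu> (snd e))"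

text \<open>Carriers are taken inside nat (countable semigroups), which suffices since
  relatively free semigroups on countably many generators are countable.\<close>
definition model :: "nat set \<Rightarrow> (nat \<Rightarrow> nat \<Rightarrow> nat) \<Rightarrow> ident set \<Rightarrow> bool" where
  "model A f T \<longleftrightarrow> is_csg A f \<and> (\<forall>e\<in>T. sat A f e)"

definition closure :: "ident set \<Rightarrow> ident set" where
  "closure \<Sigma> = {e. \<forall>A f. model A f \<Sigma> \<longrightarrow> sat A f e}"

text \<open>A commutative semigroup variety, represented by its equational theory.\<close>
definition cvar :: "ident set \<Rightarrow> bool" where
  "cvar T \<longleftrightarrow> T = closure T"

text \<open>Join in the lattice of commutative semigroup varieties:
  Id(Y \<or> Z) = Id(Y) \<inter> Id(Z).\<close>
definition vjoin :: "ident set \<Rightarrow> ident set \<Rightarrow> ident set" where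
  "vjoin Y Z = Y \<inter> Z"

fun tpow :: "trm \<Rightarrow> nat \<Rightarrow> trm" where
  "tpow x 0 = x"
| "tpow x (Suc n) = Mul (tpow x n) x"
text \<open>tpow x n is x^(n+1).\<close>

text \<open>C_m = var{x^m = x^(m+1), xy = yx}; C_0 is trivial (all identities).\<close>
definition Cvar :: "nat \<Rightarrow> ident set" where
  "Cvar m = (if m = 0 then UNIV
             else closure {(tpow (Var 0) (m - 1), tpow (Var 0) m)})"

fun apow :: "('a \<Rightarrow> 'a \<Rightarrow> 'a) \<Rightarrow> 'a \<Rightarrow> nat \<Rightarrow> 'a" where
  "apow f a 0 = a"
| "apow f a (Suc n) = f (apow f a n) a"

definition is_group :: "'a set \<Rightarrow> ('a \<Rightarrow> 'a \<Rightarrow> 'a) \<Rightarrow> bool" where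
  "is_group A f \<longleftrightarrow> (\<exists>u\<in>A. (\<forall>a\<in>A. f u a = a \<and> f a u = a)
      \<and> (\<forall>a\<in>A. \<exists>b\<in>A. f a b = u \<and> f b a = u))"

definition combinatorial :: "ident set \<Rightarrow> bool" where
  "combinatorial T \<longleftrightarrow> (\<forall>A f. model A f T \<and> is_group A f \<longrightarrow> (\<exists>u. A = {u}))"

definition is_nil :: "'a set \<Rightarrow> ('a \<Rightarrow> 'a \<Rightarrow> 'a) \<Rightarrow> bool" where
  "is_nil A f \<longleftrightarrow> (\<exists>z\<in>A. (\<forall>a\<in>A. f z a = z \<and> f a z = z)
      \<and> (\<forall>a\<in>A. \<exists>n. apow f a n = z))"

definition nilvar :: "ident set \<Rightarrow> bool" where
  "nilvar T \<longleftrightarrow> (\<forall>A f. model A f T \<longrightarrow> is_nil A f)"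

end

theory Submission
  imports Defs "HOL-Library.Countable"
begin

text \<open>
  Varieties of commutative semigroups are represented by their equational theories, so that
  \<open>V \<subseteq> C\<^sub>k\<close> between theories means that the variety \<open>C\<^sub>k\<close> lies in \<open>V\<close>, and joins are
  intersections.

  The identities of \<open>C\<^sub>m\<close> are exactly those in which every variable occurs equally often on
  both sides up to truncation at \<open>m\<close> (\<open>Cvar_iff\<close>): necessity is read off the truncated additive
  semigroup \<open>{0..m}\<close>, sufficiency follows by deleting variables one at a time in \<open>S\<^sup>1\<close>.
  \<open>C\<^sub>m\<close> is combinatorial, since in a group \<open>a\<^sup>m = a\<^sup>m\<^sup>+\<^sup>1\<close> forces \<open>a = 1\<close>; and if \<open>C\<^sub>m = Y \<or> Z\<close> with
  \<open>Y\<close> nil, an identity \<open>y\<^sup>n w = y\<^sup>n\<close> of \<open>Y\<close> (found in its relatively free semigroup) transports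
  every identity of \<open>Z\<close> into one of \<open>C\<^sub>m\<close> that counts a given variable, whence \<open>Z = C\<^sub>m\<close>.

  Conversely, a combinatorial \<open>V\<close> excludes every cyclic group \<open>\<int>/d\<close> and therefore satisfies
  \<open>x\<^sup>m = x\<^sup>m\<^sup>+\<^sup>1\<close> for some \<open>m\<close>. For the largest \<open>k \<le> m\<close> with \<open>C\<^sub>k\<close> in \<open>V\<close>, either \<open>k = m\<close> and \<open>V = C\<^sub>m\<close>, or
  \<open>V = (V \<and> [x y\<^sup>m = y\<^sup>m]) \<or> C\<^sub>k\<close>: in a semigroup of \<open>V\<close>, elements are separated by the Rees quotient
  modulo the ideal of elements fixed by idempotents \<open>x\<^sup>m\<close> (a nil semigroup of \<open>V\<close>) together with
  the monoid retracts \<open>x\<^sup>m S\<close> (which lie in \<open>C\<^sub>k\<close>). Irreducibility then yields \<open>V = C\<^sub>k\<close>.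
\<close>

section \<open>Words: substitution, occurrence counts and weighted lengths\<close>

fun subst :: "(nat \<Rightarrow> trm) \<Rightarrow> trm \<Rightarrow> trm" where
  "subst \<sigma> (Var i) = \<sigma> i"
| "subst \<sigma> (Mul s t) = Mul (subst \<sigma> s) (subst \<sigma> t)"

fun cnt :: "nat \<Rightarrow> trm \<Rightarrow> nat" where
  "cnt i (Var j) = (if i = j then 1 else 0)"
| "cnt i (Mul s t) = cnt i s + cnt i t"

text \<open>Length of a word in which the variable \<open>i\<close> has weight \<open>w i\<close>; this is the value
  of the word in the additive semigroup of naturals.\<close>
fun sumv :: "(nat \<Rightarrow> nat) \<Rightarrow> trm \<Rightarrow> nat" where
  "sumv w (Var i) = w i"
| "sumv w (Mul s t) = sumv w s + sumv w t"

lemma finite_vars: "finite {i. 0 < cnt i t}"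
proof (induction t)
  case (Mul s t)
  have "{i. 0 < cnt i (Mul s t)} = {i. 0 < cnt i s} \<union> {i. 0 < cnt i t}" by auto
  then show ?case using Mul by simp
qed simp

lemma cnt_eq_sumv: "cnt i t = sumv (\<lambda>j. if j = i then 1 else 0) t"
  by (induction t) auto

lemma sumv_subst: "sumv w (subst \<sigma> t) = sumv (\<lambda>j. sumv w (\<sigma> j)) t"
  by (induction t) auto

lemma cnt_subst: "cnt i (subst \<sigma> t) = sumv (\<lambda>j. cnt i (\<sigma> j)) t"
  by (simp add: cnt_eq_sumv sumv_subst)

lemma sumv_tpow: "sumv w (tpow s k) = (k + 1) * sumv w s"
  by (induction k) auto

lemma sumv_add: "sumv (\<lambda>i. v i + w i) t = sumv v t + sumv w t"
  by (induction t) auto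

lemma sumv_const: "sumv (\<lambda>_. c) t = c * sumv (\<lambda>_. 1) t"
  by (induction t) (auto simp: algebra_simps)

lemma sumv_pos: "(\<And>i. w i \<ge> 1) \<Longrightarrow> sumv w t \<ge> 1"
  by (induction t) auto

lemma csgD:
  assumes "is_csg A f"
  shows "A \<noteq> {}" "a \<in> A \<Longrightarrow> b \<in> A \<Longrightarrow> f a b \<in> A"
    "a \<in> A \<Longrightarrow> b \<in> A \<Longrightarrow> c \<in> A \<Longrightarrow> f (f a b) c = f a (f b c)"
    "a \<in> A \<Longrightarrow> b \<in> A \<Longrightarrow> f a b = f b a"
  using assms unfolding is_csg_def by blast+

lemma csg_swap:
  assumes c: "is_csg A f" and "p \<in> A" "q \<in> A" "r \<in> A" "s \<in> A"
  shows "f (f p q) (f r s) = f (f p r) (f q s)"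
proof -
  note C = csgD[OF c]
  have "f (f p q) (f r s) = f p (f q (f r s))" using C assms by simp
  also have "\<dots> = f p (f r (f q s))" using C assms by metis
  also have "\<dots> = f (f p r) (f q s)" using C assms by simp
  finally show ?thesis .
qed

lemma eval_in: "is_csg A f \<Longrightarrow> (\<And>i. \<nu> i \<in> A) \<Longrightarrow> eval f \<nu> t \<in> A"
  by (induction t) (auto dest: csgD)

lemma apow_in: "is_csg A f \<Longrightarrow> a \<in> A \<Longrightarrow> apow f a n \<in> A"
  by (induction n) (auto dest: csgD)

text \<open>Recall that \<open>apow f a n\<close> is the power \<open>a\<^sup>n\<^sup>+\<^sup>1\<close>.\<close>
lemma apow_add:
  assumes c: "is_csg A f" and a: "a \<in> A"
  shows "f (apow f a p) (apow f a q) = apow f a (p + q + 1)"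
proof (induction q)
  case (Suc q)
  have "f (apow f a p) (apow f a (Suc q)) = f (f (apow f a p) (apow f a q)) a"
    using csgD(3)[OF c apow_in[OF c a] apow_in[OF c a] a] by simp
  then show ?case using Suc by simp
qed simp

lemma eval_tpow: "eval f \<nu> (tpow s n) = apow f (eval f \<nu> s) n"
  by (induction n) auto

lemma eval_subst: "eval f \<nu> (subst \<sigma> t) = eval f (\<lambda>i. eval f \<nu> (\<sigma> i)) t"
  by (induction t) auto

lemma eval_powers:
  assumes c: "is_csg A f" and g: "g \<in> A"
  shows "eval f (\<lambda>i. apow f g (n i)) t = apow f g (sumv (\<lambda>i. n i + 1) t - 1)"
proof (induction t)
  case (Mul s t)
  let ?w = "\<lambda>i. n i + 1"
  have pos: "sumv ?w s \<ge> 1" "sumv ?w t \<ge> 1" by (rule sumv_pos, simp)+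
  have "eval f (\<lambda>i. apow f g (n i)) (Mul s t) = f (apow f g (sumv ?w s - 1)) (apow f g (sumv ?w t - 1))"
    using Mul by simp
  also have "\<dots> = apow f g (sumv ?w s - 1 + (sumv ?w t - 1) + 1)" by (rule apow_add[OF c g])
  also have "\<dots> = apow f g (sumv ?w (Mul s t) - 1)"
    using pos by (intro arg_cong[where f = "apow f g"]) simp
  finally show ?case .
qed simp

text \<open>Semigroups \<open>(A, \<lambda>a b. h (a + b))\<close> obtained from \<open>(\<nat>, +)\<close> by a retraction \<open>h\<close> compatible
  with addition; they provide the concrete models below.\<close>
lemma add_csg:
  fixes h :: "nat \<Rightarrow> nat"
  assumes h1: "\<And>a b. h (h a + b) = h (a + b)" and h2: "\<And>a b. h (a + h b) = h (a + b)"
    and cl: "\<And>a b. a \<in> A \<Longrightarrow> b \<in> A \<Longrightarrow> h (a + b) \<in> A" and ne: "A \<noteq> {}"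
  shows "is_csg A (\<lambda>a b. h (a + b))"
  unfolding is_csg_def
proof (intro conjI ballI)
  fix a b c
  show "h (h (a + b) + c) = h (a + h (b + c))" by (simp add: h1 h2 add.assoc)
  show "h (a + b) = h (b + a)" by (simp only: add.commute)
qed (use ne cl in auto)

lemma eval_add:
  assumes "\<And>a b. h (h a + b) = h (a + b)" "\<And>a b. h (a + h b) = h (a + b)" "\<And>i. h (\<nu> i) = \<nu> i"
  shows "eval (\<lambda>a b. h (a + b)) \<nu> t = h (sumv \<nu> t)"
  by (induction t) (use assms in simp_all)

lemma modelD: "model A f T \<Longrightarrow> is_csg A f" "model A f T \<Longrightarrow> e \<in> T \<Longrightarrow> sat A f e"
  unfolding model_def by auto

lemma satD: "sat A f (u, v) \<Longrightarrow> (\<And>i. \<nu> i \<in> A) \<Longrightarrow> eval f \<nu> u = eval f \<nu> v"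
  unfolding sat_def by auto

lemma model_eq: "model A f T \<Longrightarrow> (u, v) \<in> T \<Longrightarrow> (\<And>i. \<nu> i \<in> A) \<Longrightarrow> eval f \<nu> u = eval f \<nu> v"
  using satD modelD(2) by blast

lemma closure_I: "(\<And>A f. model A f T \<Longrightarrow> sat A f e) \<Longrightarrow> e \<in> closure T"
  unfolding closure_def by blast

lemma closure_D: "e \<in> closure T \<Longrightarrow> model A f T \<Longrightarrow> sat A f e"
  unfolding closure_def by blast

lemma closure_incr: "T \<subseteq> closure T"
  unfolding closure_def model_def by blast

lemma model_closure: "model A f T \<Longrightarrow> model A f (closure T)"
  unfolding model_def closure_def by blast

lemma model_mono: "model A f T \<Longrightarrow> S \<subseteq> T \<Longrightarrow> model A f S"
  unfolding model_def by blast

lemma model_closure_iff: "model A f (closure T) \<longleftrightarrow> model A f T"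
  using model_closure closure_incr unfolding model_def by blast

lemma closure_mono: "S \<subseteq> T \<Longrightarrow> closure S \<subseteq> closure T"
  unfolding closure_def model_def by blast

lemma cvar_closure: "cvar (closure T)"
  unfolding cvar_def by (meson closure_D closure_I closure_incr model_closure subsetI subset_antisym)

lemma cvar_member: "cvar T \<Longrightarrow> (\<And>A f. model A f T \<Longrightarrow> sat A f e) \<Longrightarrow> e \<in> T"
  unfolding cvar_def by (metis closure_I)

lemma sat_I: "(\<And>\<nu>. (\<And>i. \<nu> i \<in> A) \<Longrightarrow> eval f \<nu> u = eval f \<nu> v) \<Longrightarrow> sat A f (u, v)"
  unfolding sat_def by simp

lemma cvar_refl: "cvar T \<Longrightarrow> (t, t) \<in> T"
  by (rule cvar_member, assumption, rule sat_I) simp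

lemma cvar_sym: "cvar T \<Longrightarrow> (s, t) \<in> T \<Longrightarrow> (t, s) \<in> T"
  by (rule cvar_member, assumption, rule sat_I) (simp add: model_eq)

lemma cvar_trans:
  assumes "cvar T" "(s, t) \<in> T" "(t, r) \<in> T"
  shows "(s, r) \<in> T"
proof (rule cvar_member[OF assms(1)], rule sat_I)
  fix A f and \<nu> :: "nat \<Rightarrow> nat" assume "model A f T" "\<And>i. \<nu> i \<in> A"
  then show "eval f \<nu> s = eval f \<nu> r" using model_eq assms(2,3) by metis
qed

lemma cvar_mul:
  assumes "cvar T" "(s, t) \<in> T" "(s', t') \<in> T"
  shows "(Mul s s', Mul t t') \<in> T"
proof (rule cvar_member[OF assms(1)], rule sat_I)
  fix A f and \<nu> :: "nat \<Rightarrow> nat" assume "model A f T" "\<And>i. \<nu> i \<in> A"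
  then show "eval f \<nu> (Mul s s') = eval f \<nu> (Mul t t')" using model_eq assms(2,3) by simp
qed

lemma cvar_subst:
  assumes cT: "cvar T" and st: "(s, t) \<in> T"
  shows "(subst \<sigma> s, subst \<sigma> t) \<in> T"
proof (rule cvar_member[OF cT], rule sat_I)
  fix A f and \<nu> :: "nat \<Rightarrow> nat" assume m: "model A f T" and \<nu>: "\<And>i. \<nu> i \<in> A"
  show "eval f \<nu> (subst \<sigma> s) = eval f \<nu> (subst \<sigma> t)"
    unfolding eval_subst using model_eq[OF m st] eval_in[OF modelD(1)[OF m] \<nu>] .
qed

lemma cvar_comm:
  assumes "cvar T"
  shows "(Mul s t, Mul t s) \<in> T"
proof (rule cvar_member[OF assms], rule sat_I)
  fix A f and \<nu> :: "nat \<Rightarrow> nat" assume "model A f T" "\<And>i. \<nu> i \<in> A"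
  then show "eval f \<nu> (Mul s t) = eval f \<nu> (Mul t s)"
    using csgD(4)[OF modelD(1)] eval_in[OF modelD(1)] by simp
qed

lemma cvar_assoc:
  assumes "cvar T"
  shows "(Mul (Mul s t) r, Mul s (Mul t r)) \<in> T"
proof (rule cvar_member[OF assms], rule sat_I)
  fix A f and \<nu> :: "nat \<Rightarrow> nat" assume "model A f T" "\<And>i. \<nu> i \<in> A"
  then show "eval f \<nu> (Mul (Mul s t) r) = eval f \<nu> (Mul s (Mul t r))"
    using csgD(3)[OF modelD(1)] eval_in[OF modelD(1)] by simp
qed

lemma hom_eval:
  assumes hom: "\<And>a b. a \<in> A \<Longrightarrow> b \<in> A \<Longrightarrow> h (f a b) = g (h a) (h b)"
    and c: "is_csg A f" and \<nu>: "\<And>i. \<nu> i \<in> A"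
  shows "eval g (\<lambda>i. h (\<nu> i)) t = h (eval f \<nu> t)"
  by (induction t) (simp_all add: hom eval_in[OF c \<nu>])

lemma hom_image_model:
  assumes m: "model A f T" and hom: "\<And>a b. a \<in> A \<Longrightarrow> b \<in> A \<Longrightarrow> h (f a b) = g (h a) (h b)"
    and onto: "h ` A = B"
  shows "model B g T"
proof -
  have c: "is_csg A f" using modelD(1)[OF m] .
  note C = csgD[OF c]
  have cB: "is_csg B g"
    unfolding is_csg_def
  proof (intro conjI ballI)
    show "B \<noteq> {}" using onto C(1) by blast
  next
    fix x y assume "x \<in> B" "y \<in> B"
    then obtain a b where "a \<in> A" "b \<in> A" "x = h a" "y = h b" using onto by blast
    then have "g x y = h (f a b)" "f a b \<in> A" using hom C(2) by simp_all
    then show "g x y \<in> B" using onto by blast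
  next
    fix x y z assume "x \<in> B" "y \<in> B" "z \<in> B"
    then obtain a b c where abc: "a \<in> A" "b \<in> A" "c \<in> A" "x = h a" "y = h b" "z = h c"
      using onto by blast
    then have "g (g x y) z = h (f (f a b) c)" "g x (g y z) = h (f a (f b c))"
      using hom C(2) by simp_all
    then show "g (g x y) z = g x (g y z)" using C(3) abc by simp
  next
    fix x y assume "x \<in> B" "y \<in> B"
    then obtain a b where ab: "a \<in> A" "b \<in> A" "x = h a" "y = h b" using onto by blast
    then have "g x y = h (f a b)" "g y x = h (f b a)" using hom by simp_all
    then show "g x y = g y x" using C(4) ab by simp
  qed
  have "sat B g (u, v)" if e: "(u, v) \<in> T" for u v
  proof (rule sat_I)
    fix \<mu> :: "nat \<Rightarrow> nat" assume \<mu>: "\<And>i. \<mu> i \<in> B"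
    define \<nu> where "\<nu> i = (SOME a. a \<in> A \<and> \<mu> i = h a)" for i
    have "\<exists>a. a \<in> A \<and> \<mu> i = h a" for i using \<mu>[of i] onto by blast
    then have \<nu>: "\<nu> i \<in> A" "\<mu> i = h (\<nu> i)" for i unfolding \<nu>_def by (metis (mono_tags, lifting) someI_ex)+
    then have "\<mu> = (\<lambda>i. h (\<nu> i))" by auto
    then have "eval g \<mu> t = h (eval f \<nu> t)" for t using hom_eval[where h = h and g = g and f = f and \<nu> = \<nu>, OF hom c] \<nu>(1) by simp
    then show "eval g \<mu> u = eval g \<mu> v" using model_eq[OF m e, of \<nu>] \<nu>(1) by simp
  qed
  then show ?thesis using cB unfolding model_def by auto
qed

section \<open>The varieties \<open>C\<^sub>m\<close>\<close>

text \<open>Every element satisfies \<open>a\<^sup>m = a\<^sup>m\<^sup>+\<^sup>1\<close>, the defining law of \<open>C\<^sub>m\<close>.\<close>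
definition pow_stable :: "'a set \<Rightarrow> ('a \<Rightarrow> 'a \<Rightarrow> 'a) \<Rightarrow> nat \<Rightarrow> bool" where
  "pow_stable A f m \<longleftrightarrow> (\<forall>a\<in>A. apow f a (m - 1) = apow f a m)"

lemma Cvar_cvar: "cvar (Cvar m)"
proof (cases "m = 0")
  case True
  then show ?thesis using closure_incr[of UNIV] by (auto simp: Cvar_def cvar_def)
qed (simp add: Cvar_def cvar_closure)

lemma model_Cvar:
  assumes m: "m \<ge> 1"
  shows "model A f (Cvar m) \<longleftrightarrow> is_csg A f \<and> pow_stable A f m"
proof -
  have "model A f (Cvar m) \<longleftrightarrow> model A f {(tpow (Var 0) (m - 1), tpow (Var 0) m)}"
    using m by (simp add: Cvar_def model_closure_iff)
  also have "\<dots> \<longleftrightarrow> is_csg A f \<and> pow_stable A f m"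
    unfolding model_def sat_def pow_stable_def by (auto simp: eval_tpow)
  finally show ?thesis .
qed

lemma apow_stable:
  assumes st: "pow_stable A f m" and m: "m \<ge> 1" and a: "a \<in> A" and n: "m - 1 \<le> n"
  shows "apow f a n = apow f a (m - 1)"
  using n
proof (induction n rule: dec_induct)
  case (step n)
  have "apow f a (Suc n) = f (apow f a (m - 1)) a" using step by simp
  also have "\<dots> = apow f a m" using m by (cases m) auto
  finally show ?case using st a unfolding pow_stable_def by simp
qed simp

text \<open>The truncated additive semigroup \<open>({0..m}, \<lambda>a b. min m (a + b))\<close> lies in \<open>C\<^sub>m\<close>; evaluating
  a word at the indicator of a variable counts its occurrences up to \<open>m\<close>.\<close>
lemma trunc_csg: "is_csg {..m::nat} (\<lambda>a b. min m (a + b))"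
  by (rule add_csg) (auto simp: min_def)

lemma trunc_eval: "(\<And>i. \<nu> i \<le> (m::nat)) \<Longrightarrow> eval (\<lambda>a b. min m (a + b)) \<nu> t = min m (sumv \<nu> t)"
  by (rule eval_add) auto

lemma trunc_model:
  assumes m: "m \<ge> 1"
  shows "model {..m} (\<lambda>a b. min m (a + b)) (Cvar m)"
proof -
  obtain k where k: "m = Suc k" using m by (cases m) auto
  have pw: "apow (\<lambda>a b. min m (a + b)) a n = min m ((n + 1) * a)" if "a \<le> m" for a n
    using trunc_eval[of "\<lambda>_. a" m "tpow (Var 0) n"] that by (simp add: eval_tpow sumv_tpow)
  have "min m (m * a) = min m ((m + 1) * a)" for a
    using k by (cases a) (auto simp: min_def)
  then have "pow_stable {..m} (\<lambda>a b. min m (a + b)) m"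
    unfolding pow_stable_def using pw k by (simp del: apow.simps)
  then show ?thesis using model_Cvar[OF m] trunc_csg by blast
qed

lemma Cvar_trunc:
  assumes "(u, v) \<in> Cvar m"
  shows "min m (cnt i u) = min m (cnt i v)"
proof (cases "m = 0")
  case False
  let ?\<nu> = "\<lambda>j. if j = i then 1 else 0"
  have "eval (\<lambda>a b. min m (a + b)) ?\<nu> u = eval (\<lambda>a b. min m (a + b)) ?\<nu> v"
    using model_eq[OF trunc_model assms] False by simp
  then show ?thesis using False by (simp add: trunc_eval cnt_eq_sumv)
qed simp

text \<open>To compare values of words with equal truncated occurrence counts we evaluate in the
  monoid \<open>S\<^sup>1\<close>, modelled on \<open>'a option\<close> with \<open>None\<close> as adjoined identity: an assignment
  sending a variable to \<open>None\<close> deletes that variable from the word.\<close>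
fun omul :: "('a \<Rightarrow> 'a \<Rightarrow> 'a) \<Rightarrow> 'a option \<Rightarrow> 'a option \<Rightarrow> 'a option" where
  "omul f None y = y"
| "omul f (Some a) None = Some a"
| "omul f (Some a) (Some b) = Some (f a b)"

text \<open>\<open>opow f a n\<close> is the power \<open>a\<^sup>n\<close> in \<open>S\<^sup>1\<close>, with \<open>a\<^sup>0 = 1\<close>.\<close>
fun opow :: "('a \<Rightarrow> 'a \<Rightarrow> 'a) \<Rightarrow> 'a \<Rightarrow> nat \<Rightarrow> 'a option" where
  "opow f a 0 = None"
| "opow f a (Suc n) = Some (apow f a n)"

fun oeval :: "('a \<Rightarrow> 'a \<Rightarrow> 'a) \<Rightarrow> (nat \<Rightarrow> 'a option) \<Rightarrow> trm \<Rightarrow> 'a option" where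
  "oeval f \<nu> (Var i) = \<nu> i"
| "oeval f \<nu> (Mul s t) = omul f (oeval f \<nu> s) (oeval f \<nu> t)"

context
  fixes A :: "'a set" and f :: "'a \<Rightarrow> 'a \<Rightarrow> 'a"
  assumes c: "is_csg A f"
begin

lemma omul_in: "x \<in> insert None (Some ` A) \<Longrightarrow> y \<in> insert None (Some ` A) \<Longrightarrow>
    omul f x y \<in> insert None (Some ` A)"
  by (cases x; cases y) (auto dest: csgD(2)[OF c])

lemma omul_swap:
  assumes "x \<in> insert None (Some ` A)" "y \<in> insert None (Some ` A)"
    "z \<in> insert None (Some ` A)" "w \<in> insert None (Some ` A)"
  shows "omul f (omul f x y) (omul f z w) = omul f (omul f x z) (omul f y w)"
  using assms csg_swap[OF c] csgD(3,4)[OF c] csgD(2)[OF c]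
  by (cases x; cases y; cases z; cases w) auto

lemma opow_add: "a \<in> A \<Longrightarrow> omul f (opow f a p) (opow f a q) = opow f a (p + q)"
  using apow_add[OF c] by (cases p; cases q) auto

lemma oeval_in: "(\<And>i. \<nu> i \<in> insert None (Some ` A)) \<Longrightarrow> oeval f \<nu> t \<in> insert None (Some ` A)"
  by (induction t) (simp_all add: omul_in del: insert_iff)

lemma oeval_delete:
  assumes \<nu>: "\<And>j. \<nu> j \<in> insert None (Some ` A)" and i: "\<nu> i = Some a"
  shows "oeval f \<nu> t = omul f (opow f a (cnt i t)) (oeval f (\<nu>(i := None)) t)"
proof (induction t)
  case (Var j)
  then show ?case using i \<nu>[of j] by auto
next
  case (Mul s t)
  have a: "a \<in> A" using \<nu>[of i] i by auto
  have \<nu>': "(\<nu>(i := None)) j \<in> insert None (Some ` A)" for j using \<nu> by simp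
  have pow: "opow f a n \<in> insert None (Some ` A)" for n using apow_in[OF c a] by (cases n) auto
  show ?case
    using Mul omul_swap[OF pow oeval_in[OF \<nu>'] pow oeval_in[OF \<nu>']] opow_add[OF a] by simp
qed

end

lemma oeval_cong: "(\<And>j. 0 < cnt j t \<Longrightarrow> \<nu> j = \<mu> j) \<Longrightarrow> oeval f \<nu> t = oeval f \<mu> t"
  by (induction t) auto

lemma oeval_None: "oeval f (\<lambda>_. None) t = None"
  by (induction t) auto

lemma oeval_Some: "oeval f (\<lambda>i. Some (\<nu> i)) t = Some (eval f \<nu> t)"
  by (induction t) auto

lemma opow_trunc:
  assumes st: "pow_stable A f m" and m: "m \<ge> 1" and a: "a \<in> A" and pq: "min m p = min m q"
  shows "opow f a p = opow f a q"
proof (cases "p = q")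
  case False
  then have "p \<ge> m" "q \<ge> m" using pq by (auto simp: min_def split: if_splits)
  moreover have "opow f a n = Some (apow f a (m - 1))" if n: "n \<ge> m" for n
  proof -
    obtain n' where "n = Suc n'" using n m by (cases n) auto
    then show ?thesis using apow_stable[OF st m a, of n'] n by simp
  qed
  ultimately show ?thesis by simp
qed simp

text \<open>The proof deletes the variables one at a time, by induction on a finite set of variables.\<close>
lemma trunc_imp_Cvar:
  assumes m: "m \<ge> 1" and uv: "\<And>i. min m (cnt i u) = min m (cnt i v)"
  shows "(u, v) \<in> Cvar m"
proof (rule cvar_member[OF Cvar_cvar])
  fix A f assume "model A f (Cvar m)"
  then have c: "is_csg A f" and st: "pow_stable A f m" using model_Cvar[OF m] by auto
  have "eval f \<nu> u = eval f \<nu> v" if \<nu>: "\<And>i. \<nu> i \<in> A" for \<nu>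
  proof -
    define \<nu>\<^sub>I where "\<nu>\<^sub>I I j = (if j \<in> I then Some (\<nu> j) else None)" for I j
    have \<nu>\<^sub>I: "\<nu>\<^sub>I I j \<in> insert None (Some ` A)" for I j using \<nu> unfolding \<nu>\<^sub>I_def by auto
    have "oeval f (\<nu>\<^sub>I I) u = oeval f (\<nu>\<^sub>I I) v" if "finite I" for I
      using that
    proof (induction I rule: finite_induct)
      case empty
      then show ?case by (simp add: \<nu>\<^sub>I_def oeval_None)
    next
      case (insert i I)
      have del: "(\<nu>\<^sub>I (insert i I))(i := None) = \<nu>\<^sub>I I" using insert(2) by (auto simp: \<nu>\<^sub>I_def)
      have "opow f (\<nu> i) (cnt i u) = opow f (\<nu> i) (cnt i v)" by (rule opow_trunc[OF st m \<nu> uv])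
      moreover have "oeval f (\<nu>\<^sub>I (insert i I)) t = omul f (opow f (\<nu> i) (cnt i t)) (oeval f (\<nu>\<^sub>I I) t)"
        for t unfolding del[symmetric] by (rule oeval_delete[OF c \<nu>\<^sub>I]) (simp add: \<nu>\<^sub>I_def)
      ultimately show ?case using insert.IH by simp
    qed
    moreover have "oeval f (\<nu>\<^sub>I ({i. 0 < cnt i u} \<union> {i. 0 < cnt i v})) t = Some (eval f \<nu> t)"
      if "t \<in> {u, v}" for t
      using that oeval_cong[of t _ "\<lambda>i. Some (\<nu> i)"] by (auto simp: \<nu>\<^sub>I_def oeval_Some)
    ultimately show ?thesis using finite_vars by (metis finite_UnI insertCI option.inject)
  qed
  then show "sat A f (u, v)" unfolding sat_def by simp
qed

lemma Cvar_iff: "m \<ge> 1 \<Longrightarrow> (u, v) \<in> Cvar m \<longleftrightarrow> (\<forall>i. min m (cnt i u) = min m (cnt i v))"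
  using Cvar_trunc trunc_imp_Cvar by blast

section \<open>Relatively free semigroups and nil-varieties\<close>

text \<open>The free semigroup of a variety on countably many generators has the classes of words
  as elements; we code a class by (the natural number of) a chosen representative word.\<close>
instance trm :: countable by countable_datatype

definition rep :: "ident set \<Rightarrow> trm \<Rightarrow> trm" where
  "rep T t = (SOME s. (t, s) \<in> T)"

definition fcar :: "ident set \<Rightarrow> nat set" where
  "fcar T = range (\<lambda>t. to_nat (rep T t))"

definition fop :: "ident set \<Rightarrow> nat \<Rightarrow> nat \<Rightarrow> nat" where
  "fop T a b = to_nat (rep T (Mul (from_nat a) (from_nat b)))"

context
  fixes T :: "ident set"
  assumes cT: "cvar T"
begin

lemma rep_rel: "(t, rep T t) \<in> T"
  unfolding rep_def by (rule someI[of _ t]) (rule cvar_refl[OF cT])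

lemma rep_eq_iff: "rep T s = rep T t \<longleftrightarrow> (s, t) \<in> T"
proof
  assume "(s, t) \<in> T"
  then have "(\<lambda>x. (s, x) \<in> T) = (\<lambda>x. (t, x) \<in> T)"
    using cvar_sym[OF cT] cvar_trans[OF cT] by blast
  then show "rep T s = rep T t" unfolding rep_def by simp
next
  assume "rep T s = rep T t"
  then have "(rep T s, t) \<in> T" using cvar_sym[OF cT rep_rel[of t]] by simp
  then show "(s, t) \<in> T" using cvar_trans[OF cT rep_rel[of s]] by blast
qed

lemma rep_idem: "rep T (rep T t) = rep T t"
  using rep_eq_iff cvar_sym[OF cT rep_rel] by blast

lemma fop_rep: "fop T (to_nat (rep T s)) (to_nat (rep T t)) = to_nat (rep T (Mul s t))"
proof -
  have "(Mul (rep T s) (rep T t), Mul s t) \<in> T"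
    using cvar_mul[OF cT cvar_sym[OF cT rep_rel] cvar_sym[OF cT rep_rel]] .
  then show ?thesis unfolding fop_def by (simp add: rep_eq_iff)
qed

lemma eval_free: "eval (fop T) (\<lambda>i. to_nat (rep T (\<sigma> i))) t = to_nat (rep T (subst \<sigma> t))"
  by (induction t) (auto simp: fop_rep)

lemma apow_free: "apow (fop T) (to_nat (rep T s)) n = to_nat (rep T (tpow s n))"
  by (induction n) (auto simp: fop_rep)

lemma fcar_rep: "a \<in> fcar T \<Longrightarrow> a = to_nat (rep T (from_nat a))"
  unfolding fcar_def using rep_idem by auto

lemma free_csg: "is_csg (fcar T) (fop T)"
  unfolding is_csg_def
proof (intro conjI ballI)
  show "fcar T \<noteq> {}" unfolding fcar_def by simp
next
  fix a b assume "a \<in> fcar T" "b \<in> fcar T"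
  then show "fop T a b \<in> fcar T" unfolding fop_def fcar_def by auto
next
  fix a b c assume "a \<in> fcar T" "b \<in> fcar T" "c \<in> fcar T"
  then obtain r s t where abc: "a = to_nat (rep T r)" "b = to_nat (rep T s)" "c = to_nat (rep T t)"
    unfolding fcar_def by auto
  have "rep T (Mul (Mul r s) t) = rep T (Mul r (Mul s t))"
    using rep_eq_iff cvar_assoc[OF cT] by blast
  then show "fop T (fop T a b) c = fop T a (fop T b c)" by (simp add: abc fop_rep)
next
  fix a b assume "a \<in> fcar T" "b \<in> fcar T"
  then obtain r s where ab: "a = to_nat (rep T r)" "b = to_nat (rep T s)" unfolding fcar_def by auto
  have "rep T (Mul r s) = rep T (Mul s r)" using rep_eq_iff cvar_comm[OF cT] by blast
  then show "fop T a b = fop T b a" by (simp add: ab fop_rep)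
qed

lemma free_model: "model (fcar T) (fop T) T"
  unfolding model_def
proof (intro conjI ballI free_csg)
  fix e assume e: "e \<in> T"
  show "sat (fcar T) (fop T) e" unfolding sat_def
  proof (intro allI impI)
    fix \<nu> :: "nat \<Rightarrow> nat" assume "\<forall>i. \<nu> i \<in> fcar T"
    then have \<nu>: "\<nu> = (\<lambda>i. to_nat (rep T (from_nat (\<nu> i))))" using fcar_rep by auto
    have "rep T (subst (\<lambda>i. from_nat (\<nu> i)) (fst e)) = rep T (subst (\<lambda>i. from_nat (\<nu> i)) (snd e))"
      using rep_eq_iff cvar_subst[OF cT, of "fst e" "snd e"] e by simp
    then show "eval (fop T) \<nu> (fst e) = eval (fop T) \<nu> (snd e)"
      by (subst (1 2) \<nu>) (simp only: eval_free)
  qed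
qed

end

text \<open>A nil-variety satisfies an identity \<open>y\<^sup>n\<^sup>+\<^sup>1 w = y\<^sup>n\<^sup>+\<^sup>1\<close>: in its free semigroup some power
  of the generator \<open>y\<close> is the zero.\<close>
lemma nil_absorbing_power:
  assumes cY: "cvar Y" and nY: "nilvar Y"
  shows "\<exists>n. \<forall>w. (Mul (tpow (Var 1) n) w, tpow (Var 1) n) \<in> Y"
proof -
  have "is_nil (fcar Y) (fop Y)" using nY free_model[OF cY] unfolding nilvar_def by blast
  then obtain z where z: "z \<in> fcar Y" "\<forall>a\<in>fcar Y. fop Y z a = z"
    "\<forall>a\<in>fcar Y. \<exists>n. apow (fop Y) a n = z" unfolding is_nil_def by blast
  obtain t0 where t0: "z = to_nat (rep Y t0)" using z(1) unfolding fcar_def by auto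
  obtain n where "apow (fop Y) (to_nat (rep Y (Var 1))) n = z" using z(3) unfolding fcar_def by blast
  then have yn: "(tpow (Var 1) n, t0) \<in> Y" using apow_free[OF cY] rep_eq_iff[OF cY] t0 by simp
  have "(Mul (tpow (Var 1) n) w, tpow (Var 1) n) \<in> Y" for w
  proof -
    have "fop Y z (to_nat (rep Y w)) = z" using z(2) unfolding fcar_def by blast
    then have "(Mul t0 w, t0) \<in> Y" using fop_rep[OF cY] rep_eq_iff[OF cY] t0 by simp
    then show ?thesis
      using cvar_mul[OF cY yn cvar_refl[OF cY]] cvar_trans[OF cY] cvar_sym[OF cY yn] by blast
  qed
  then show ?thesis by blast
qed

section \<open>\<open>C\<^sub>m\<close> is combinatorial and not a proper join with a nil-variety\<close>

text \<open>In a group of \<open>C\<^sub>m\<close>, \<open>w = a\<^sup>m\<close> satisfies \<open>w = w a\<close>, and cancelling \<open>w\<close> leaves \<open>a = 1\<close>.\<close>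
lemma Cvar_combinatorial: "combinatorial (Cvar m)"
  unfolding combinatorial_def
proof (intro allI impI)
  fix A f assume "model A f (Cvar m) \<and> is_group A f"
  then have mo: "model A f (Cvar m)" and g: "is_group A f" by auto
  have c: "is_csg A f" using modelD(1)[OF mo] .
  obtain u where u: "u \<in> A" "\<forall>a\<in>A. f u a = a" "\<forall>a\<in>A. \<exists>b\<in>A. f b a = u"
    using g unfolding is_group_def by blast
  have "a = u" if a: "a \<in> A" for a
  proof (cases "m = 0")
    case True
    then show ?thesis using model_eq[OF mo, of "Var 0" "Var 1" "\<lambda>i. if i = 0 then a else u"] a u(1)
      by (simp add: Cvar_def)
  next
    case False
    then have st: "pow_stable A f m" using model_Cvar mo by simp
    define w where "w = apow f a (m - 1)"
    have w: "w \<in> A" unfolding w_def using apow_in[OF c a] .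
    have "w = apow f a m" using st a unfolding pow_stable_def w_def by simp
    also have "\<dots> = f w a" using False unfolding w_def by (cases m) auto
    finally have ww: "w = f w a" .
    obtain w' where w': "w' \<in> A" "f w' w = u" using u(3) w by blast
    have "u = f (f w' w) a" using ww w'(2) csgD(3)[OF c w'(1) w a] by simp
    then show "a = u" using w'(2) u(2) a by simp
  qed
  then show "\<exists>u. A = {u}" using u(1) by blast
qed

text \<open>If \<open>C\<^sub>m = Y \<or> Z\<close> with \<open>Y\<close> nil, then every identity \<open>u = v\<close> of \<open>Z\<close> holds in \<open>C\<^sub>m\<close>: multiplying the
  substitution instance \<open>x \<mapsto> x, others \<mapsto> y\<close> by an absorbing power of \<open>y\<close> yields an identity of
  \<open>Y \<and> Z\<close>, from which the truncated count of \<open>x\<close> recovers that of each variable of \<open>u = v\<close>.\<close>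
lemma Cvar_nil_join:
  assumes cY: "cvar Y" and cZ: "cvar Z" and nY: "nilvar Y" and j: "Cvar m = vjoin Y Z"
  shows "Cvar m = Z"
proof (cases "m = 0")
  case False
  then have m: "m \<ge> 1" by simp
  obtain n where n: "\<And>w. (Mul (tpow (Var 1) n) w, tpow (Var 1) n) \<in> Y"
    using nil_absorbing_power[OF cY nY] by blast
  have "(u, v) \<in> Cvar m" if uv: "(u, v) \<in> Z" for u v
  proof -
    have "min m (cnt i u) = min m (cnt i v)" for i
    proof -
      define \<sigma> where "\<sigma> j = (if j = i then Var 0 else Var 1)" for j
      define L where "L = Mul (subst \<sigma> u) (tpow (Var 1) n)"
      define R where "R = Mul (subst \<sigma> v) (tpow (Var 1) n)"
      have "(L, R) \<in> Z"
        unfolding L_def R_def using cvar_mul[OF cZ cvar_subst[OF cZ uv] cvar_refl[OF cZ]] .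
      moreover have "(L, tpow (Var 1) n) \<in> Y" "(R, tpow (Var 1) n) \<in> Y"
        unfolding L_def R_def using cvar_trans[OF cY cvar_comm[OF cY] n] by auto
      then have "(L, R) \<in> Y" using cvar_trans[OF cY] cvar_sym[OF cY] by blast
      ultimately have "min m (cnt 0 L) = min m (cnt 0 R)"
        using j Cvar_trunc unfolding vjoin_def by blast
      moreover have "cnt 0 (subst \<sigma> t) = cnt i t" for t
      proof -
        have "(\<lambda>j. cnt 0 (\<sigma> j)) = (\<lambda>j. if j = i then 1 else 0)" by (auto simp: \<sigma>_def)
        then show ?thesis unfolding cnt_subst by (simp add: cnt_eq_sumv[of i t])
      qed
      ultimately show ?thesis by (simp add: L_def R_def cnt_eq_sumv[of 0 "tpow _ _"] sumv_tpow)
    qed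
    then show ?thesis using trunc_imp_Cvar[OF m] by blast
  qed
  then show ?thesis using j unfolding vjoin_def by auto
qed (use j in \<open>auto simp: Cvar_def vjoin_def\<close>)

section \<open>Combinatorial varieties satisfy \<open>x\<^sup>p = x\<^sup>p\<^sup>+\<^sup>1\<close>\<close>

definition powers_eq :: "ident set \<Rightarrow> nat \<Rightarrow> nat \<Rightarrow> bool" where
  "powers_eq V a b \<longleftrightarrow> (tpow (Var 0) a, tpow (Var 0) b) \<in> V"

context
  fixes V :: "ident set"
  assumes cV: "cvar V"
begin

lemma powers_eq_sym: "powers_eq V a b \<Longrightarrow> powers_eq V b a"
  unfolding powers_eq_def using cvar_sym[OF cV] .

lemma powers_eq_trans: "powers_eq V a b \<Longrightarrow> powers_eq V b c \<Longrightarrow> powers_eq V a c"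
  unfolding powers_eq_def using cvar_trans[OF cV] .

lemma powers_eq_shift: "powers_eq V a b \<Longrightarrow> powers_eq V (a + c) (b + c)"
  unfolding powers_eq_def by (induction c) (simp_all add: cvar_mul[OF cV _ cvar_refl[OF cV]])

lemma powers_eq_iterate: "powers_eq V a (a + d) \<Longrightarrow> powers_eq V a (a + q * d)"
proof (induction q)
  case 0
  then show ?case unfolding powers_eq_def using cvar_refl[OF cV] by simp
next
  case (Suc q)
  have "powers_eq V (a + q * d) (a + Suc q * d)"
    using powers_eq_shift[OF Suc.prems, of "q * d"] by (simp add: algebra_simps)
  then show ?case using powers_eq_trans Suc by blast
qed

text \<open>Substituting powers of \<open>x\<close> for the variables turns any identity of \<open>V\<close> into an identity
  between powers of \<open>x\<close>, with exponents the weighted lengths of the two sides.\<close>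
lemma powers_eq_of_identity:
  assumes uv: "(u, v) \<in> V"
  shows "powers_eq V (sumv (\<lambda>i. n i + 1) u - 1) (sumv (\<lambda>i. n i + 1) v - 1)"
proof -
  let ?\<sigma> = "\<lambda>i. tpow (Var 0) (n i)"
  have pow: "(subst ?\<sigma> t, tpow (Var 0) (sumv (\<lambda>i. n i + 1) t - 1)) \<in> V" for t
  proof (rule cvar_member[OF cV], rule sat_I)
    fix A f and \<nu> :: "nat \<Rightarrow> nat" assume "model A f V" "\<And>i. \<nu> i \<in> A"
    then show "eval f \<nu> (subst ?\<sigma> t) = eval f \<nu> (tpow (Var 0) (sumv (\<lambda>i. n i + 1) t - 1))"
      by (simp add: eval_subst eval_tpow eval_powers[OF modelD(1)])
  qed
  show ?thesis unfolding powers_eq_def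
    using cvar_trans[OF cV cvar_trans[OF cV cvar_sym[OF cV pow] cvar_subst[OF cV uv]] pow] .
qed

lemma cyclic_eval: "(\<And>i. \<nu> i < (d::nat)) \<Longrightarrow> eval (\<lambda>a b. (a + b) mod d) \<nu> t = sumv \<nu> t mod d"
  by (rule eval_add) (auto simp: mod_add_left_eq mod_add_right_eq)

lemma cyclic_group:
  fixes d :: nat
  assumes d: "d \<ge> 1"
  shows "is_csg {..<d} (\<lambda>a b. (a + b) mod d)" "is_group {..<d} (\<lambda>a b. (a + b) mod d)"
proof -
  show "is_csg {..<d} (\<lambda>a b. (a + b) mod d)"
    using d by (intro add_csg) (auto simp: mod_add_left_eq mod_add_right_eq dest: equals0D[where a = 0])
  have "\<exists>b\<in>{..<d}. (a + b) mod d = 0 \<and> (b + a) mod d = 0" if "a < d" for a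
    using that by (intro bexI[of _ "(d - a) mod d"]) (auto simp: mod_add_right_eq mod_add_left_eq)
  then show "is_group {..<d} (\<lambda>a b. (a + b) mod d)"
    unfolding is_group_def using d by (intro bexI[of _ 0]) auto
qed

text \<open>If the exponents of equal powers in \<open>V\<close> are always congruent modulo \<open>d\<close>, then \<open>\<int>/d\<close> lies
  in \<open>V\<close>; the substitution \<open>x\<^sub>i \<mapsto> x\<^sup>\<nu>\<^sup>(\<^sup>i\<^sup>)\<^sup>+\<^sup>d\<close> realises any assignment \<open>\<nu>\<close> modulo \<open>d\<close>.\<close>
lemma cyclic_model:
  fixes d :: nat
  assumes d: "d \<ge> 1" and cong: "\<And>a b. powers_eq V a b \<Longrightarrow> a mod d = b mod d"
  shows "model {..<d} (\<lambda>a b. (a + b) mod d) V"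
proof -
  have "sat {..<d} (\<lambda>a b. (a + b) mod d) (u, v)" if uv: "(u, v) \<in> V" for u v
  proof (rule sat_I)
    fix \<nu> :: "nat \<Rightarrow> nat" assume \<nu>: "\<And>i. \<nu> i \<in> {..<d}"
    let ?S = "\<lambda>t. sumv (\<lambda>i. \<nu> i + d) t"
    have S: "?S t = sumv \<nu> t + d * sumv (\<lambda>_. 1) t" "?S t \<ge> 1" for t
      using sumv_add[of \<nu> "\<lambda>_. d" t] sumv_const[of d t] sumv_pos[of "\<lambda>i. \<nu> i + d" t] d by auto
    have "(?S u - 1) mod d = (?S v - 1) mod d"
      using cong[OF powers_eq_of_identity[OF uv, of "\<lambda>i. \<nu> i + d - 1"]] d by simp
    then have "Suc (?S u - 1) mod d = Suc (?S v - 1) mod d" by (metis mod_Suc_eq)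
    moreover have "Suc (?S t - 1) = ?S t" for t using S(2)[of t] by simp
    ultimately have "?S u mod d = ?S v mod d" by simp
    then have "sumv \<nu> u mod d = sumv \<nu> v mod d" unfolding S(1) by simp
    then show "eval (\<lambda>a b. (a + b) mod d) \<nu> u = eval (\<lambda>a b. (a + b) mod d) \<nu> v"
      using \<nu> by (simp add: cyclic_eval)
  qed
  then show ?thesis using cyclic_group(1)[OF d] unfolding model_def by auto
qed

lemma combinatorial_gap:
  assumes comb: "combinatorial V" and d: "d \<ge> 2"
  obtains a e where "powers_eq V a (a + e)" "e mod d \<noteq> 0"
proof -
  have "\<exists>a b. powers_eq V a b \<and> a mod d \<noteq> b mod d"
  proof (rule ccontr)
    assume "\<not> ?thesis"
    then have "model {..<d} (\<lambda>a b. (a + b) mod d) V" using cyclic_model d by auto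
    then obtain z where "{..<d} = {z}"
      using comb cyclic_group(2) d unfolding combinatorial_def by fastforce
    moreover have "0 \<in> {..<d}" "1 \<in> {..<d}" using d by auto
    ultimately show False by auto
  qed
  then obtain a b where ab: "powers_eq V a b" "a mod d \<noteq> b mod d" by blast
  show thesis
  proof (cases "a < b")
    case True
    then show thesis using that[of a "b - a"] ab by (metis add.right_neutral le_add_diff_inverse less_imp_le mod_add_right_eq)
  next
    case False
    then show thesis using that[of b "a - b"] ab powers_eq_sym
      by (metis add.right_neutral le_add_diff_inverse not_less mod_add_right_eq)
  qed
qed

text \<open>A combinatorial variety satisfies \<open>x\<^sup>p\<^sup>+\<^sup>1 = x\<^sup>p\<^sup>+\<^sup>2\<close> for some \<open>p\<close>: the least \<open>d \<ge> 1\<close> with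
  \<open>x\<^sup>p = x\<^sup>p\<^sup>+\<^sup>d\<close> in \<open>V\<close> for some \<open>p\<close> must be \<open>1\<close>, as any gap not divisible by \<open>d\<close> produces, after
  reduction modulo \<open>d\<close>, a smaller one.\<close>
lemma combinatorial_periodic:
  assumes comb: "combinatorial V"
  shows "\<exists>p. powers_eq V p (Suc p)"
proof -
  let ?P = "\<lambda>e. e \<ge> 1 \<and> (\<exists>p. powers_eq V p (p + e))"
  obtain a e where "powers_eq V a (a + e)" "e mod 2 \<noteq> 0" using combinatorial_gap[OF comb, of 2] by auto
  then have ex: "?P e" by (cases e) auto
  define d where "d = (LEAST e. ?P e)"
  have Pd: "?P d" unfolding d_def using LeastI[of ?P, OF ex] .
  show ?thesis
  proof (cases "d = 1")
    case False
    then have d2: "d \<ge> 2" using Pd by auto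
    obtain p where p: "powers_eq V p (p + d)" using Pd by blast
    obtain a e where ae: "powers_eq V a (a + e)" "e mod d \<noteq> 0" using combinatorial_gap[OF comb d2] .
    define P where "P = p + a"
    have "powers_eq V P (P + d)" using powers_eq_shift[OF p, of a] unfolding P_def by (simp add: algebra_simps)
    then have "powers_eq V P (P + e div d * d)" by (rule powers_eq_iterate)
    moreover have "powers_eq V P (P + e)"
      using powers_eq_shift[OF ae(1), of p] unfolding P_def by (simp add: algebra_simps)
    ultimately have "powers_eq V (P + e div d * d) (P + e div d * d + e mod d)"
      using powers_eq_trans powers_eq_sym by (metis add.assoc div_mult_mod_eq)
    then have "\<exists>p. powers_eq V p (p + e mod d)" by blast
    then have "?P (e mod d)" using ae(2) by simp
    moreover have "e mod d < d" using d2 by simp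
    ultimately show ?thesis using not_less_Least[of "e mod d" ?P] unfolding d_def by blast
  qed (use Pd in auto)
qed

end

fun mpow :: "('a \<Rightarrow> 'a \<Rightarrow> 'a) \<Rightarrow> 'a \<Rightarrow> 'a \<Rightarrow> nat \<Rightarrow> 'a" where
  "mpow f e a 0 = e"
| "mpow f e a (Suc n) = f (mpow f e a n) a"

context
  fixes M :: "'a set" and f :: "'a \<Rightarrow> 'a \<Rightarrow> 'a" and e :: 'a
  assumes c: "is_csg M f" and e: "e \<in> M" and unit: "\<And>a. a \<in> M \<Longrightarrow> f e a = a"
begin

lemma mpow_in: "a \<in> M \<Longrightarrow> mpow f e a n \<in> M"
  by (induction n) (simp_all add: e csgD(2)[OF c])

lemma mpow_Suc_apow: "a \<in> M \<Longrightarrow> mpow f e a (Suc n) = apow f a n"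
  by (induction n) (simp_all add: unit)

lemma mpow_add: "a \<in> M \<Longrightarrow> f (mpow f e a p) (mpow f e a q) = mpow f e a (p + q)"
proof (induction q)
  case 0
  then show ?case using unit csgD(4)[OF c e mpow_in] mpow_in by simp
next
  case (Suc q)
  have "f (mpow f e a p) (mpow f e a (Suc q)) = f (f (mpow f e a p) (mpow f e a q)) a"
    using csgD(3)[OF c mpow_in mpow_in Suc.prems] Suc.prems by simp
  then show ?case using Suc by simp
qed

lemma eval_one_var: "a \<in> M \<Longrightarrow> eval f (\<lambda>j. if j = i then a else e) t = mpow f e a (cnt i t)"
  by (induction t) (auto simp: unit mpow_add)

text \<open>In \<open>C\<^sub>m\<close>, an equality \<open>a\<^sup>k = a\<^sup>k\<^sup>'\<close> with \<open>k < k'\<close> already forces \<open>a\<^sup>k = a\<^sup>k\<^sup>+\<^sup>1\<close>: both sides equal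
  the eventually constant power \<open>a\<^sup>m\<close>, since \<open>a\<^sup>k = a\<^sup>k\<^sup>+\<^sup>t\<^sup>(\<^sup>k\<^sup>'\<^sup>-\<^sup>k\<^sup>)\<close> for all \<open>t\<close>.\<close>
lemma mpow_eq_step:
  assumes st: "pow_stable M f m" and m: "m \<ge> 1" and a: "a \<in> M"
    and eq: "mpow f e a k = mpow f e a k'" and kk: "k < k'"
  shows "mpow f e a k = mpow f e a (Suc k)"
proof -
  define D where "D = k' - k"
  have D: "D \<ge> 1" "k' = k + D" using kk unfolding D_def by auto
  have shift: "mpow f e a (k + j) = mpow f e a (k' + j)" for j
    using mpow_add[OF a, of k j] mpow_add[OF a, of k' j] eq by simp
  have period: "mpow f e a (k + t * D) = mpow f e a k" for t
  proof (induction t)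
    case (Suc t)
    have "mpow f e a (k + Suc t * D) = mpow f e a (k' + t * D)" using D(2) by (simp add: algebra_simps)
    then show ?case using shift[of "t * D"] Suc by simp
  qed simp
  have tail: "mpow f e a n = apow f a (m - 1)" if n: "n \<ge> m" for n
  proof -
    obtain n' where n': "n = Suc n'" using n m by (cases n) auto
    have "apow f a n' = apow f a (m - 1)" by (rule apow_stable[OF st m a]) (use n n' in simp)
    then show ?thesis unfolding n' mpow_Suc_apow[OF a] .
  qed
  then have stable: "mpow f e a n = mpow f e a m" if "n \<ge> m" for n using that by simp
  have "m \<le> m * D" using D(1) by simp
  then have mD: "m \<le> k + m * D" by linarith
  then have "mpow f e a k = mpow f e a m" using period[of m] stable[OF mD] by simp
  moreover have "mpow f e a (Suc k) = mpow f e a m"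
    using period[of m] stable[of "Suc (k + m * D)"] mD by simp
  ultimately show ?thesis by simp
qed

lemma monoid_trivial:
  assumes pw: "mpow f e a 0 = mpow f e a (Suc 0)" and a: "a \<in> M"
  shows "a = e"
  using pw unit[OF a] by simp

lemma monoid_pow_stable:
  assumes pw: "\<And>a. a \<in> M \<Longrightarrow> mpow f e a k = mpow f e a (Suc k)" and k: "k = Suc k'"
  shows "pow_stable M f k"
  unfolding pow_stable_def
proof
  fix a assume a: "a \<in> M"
  have "apow f a (k - 1) = mpow f e a k" using mpow_Suc_apow[OF a, of k'] k by simp
  also have "\<dots> = mpow f e a (Suc k)" by (rule pw[OF a])
  also have "\<dots> = apow f a k" by (rule mpow_Suc_apow[OF a])
  finally show "apow f a (k - 1) = apow f a k" .
qed

end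

lemma monoid_sat_Cvar:
  fixes M :: "nat set"
  assumes c: "is_csg M f" and e: "e \<in> M" and unit: "\<And>a. a \<in> M \<Longrightarrow> f e a = a"
    and pw: "\<And>a. a \<in> M \<Longrightarrow> mpow f e a k = mpow f e a (Suc k)"
    and uv: "(u, v) \<in> Cvar k" and \<nu>: "\<And>i. \<nu> i \<in> M"
  shows "eval f \<nu> u = eval f \<nu> v"
proof (cases k)
  case 0
  have "eval f \<nu> t \<in> M" for t using eval_in[OF c] \<nu> by blast
  then have "eval f \<nu> t = e" for t using monoid_trivial[OF c e unit pw[unfolded \<open>k = 0\<close>]] by blast
  then show ?thesis by simp
next
  case (Suc k')
  then have "model M f (Cvar k)" using model_Cvar c monoid_pow_stable[OF c e unit pw] by simp
  then show ?thesis using model_eq[OF _ uv] \<nu> by blast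
qed

text \<open>Multiplication by an idempotent \<open>z\<close> retracts a commutative semigroup homomorphically onto
  the monoid \<open>zA\<close>, whose identity is \<open>z\<close>.\<close>
lemma idem_retract_hom:
  assumes c: "is_csg A f" and z: "z \<in> A" "f z z = z" and ab: "a \<in> A" "b \<in> A"
  shows "f z (f a b) = f (f z a) (f z b)"
  using csg_swap[OF c z(1) ab(1) z(1) ab(2)] z(2) by simp

lemma idem_retract_unit:
  assumes c: "is_csg A f" and z: "z \<in> A" "f z z = z" and b: "b \<in> (\<lambda>a. f z a) ` A"
  shows "f z b = b"
  using b csgD(3)[OF c z(1) z(1)] z(2) by auto

definition ideal :: "'a set \<Rightarrow> ('a \<Rightarrow> 'a \<Rightarrow> 'a) \<Rightarrow> 'a set \<Rightarrow> bool" where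
  "ideal A f J \<longleftrightarrow> J \<subseteq> A \<and> (\<forall>a\<in>J. \<forall>b\<in>A. f a b \<in> J)"

definition rees :: "'a set \<Rightarrow> 'a \<Rightarrow> 'a \<Rightarrow> 'a" where
  "rees J z a = (if a \<in> J then z else a)"

lemma rees_hom:
  assumes c: "is_csg A f" and J: "ideal A f J" and z: "z \<in> J" and ab: "a \<in> A" "b \<in> A"
  shows "rees J z (f a b) = rees J z (f (rees J z a) (rees J z b))"
proof (cases "a \<in> J \<or> b \<in> J")
  case True
  have in_J: "f p q \<in> J" if "p \<in> J \<or> q \<in> J" "p \<in> A" "q \<in> A" for p q
    using that(1)
  proof
    assume "q \<in> J"
    then have "f q p \<in> J" using J that(2) unfolding ideal_def by blast
    then show ?thesis using csgD(4)[OF c that(2,3)] by simp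
  qed (use J that(3) in \<open>auto simp: ideal_def\<close>)
  have "rees J z a \<in> A" "rees J z b \<in> A" using ab z J unfolding rees_def ideal_def by auto
  moreover have "rees J z a \<in> J \<or> rees J z b \<in> J" using True z unfolding rees_def by auto
  ultimately show ?thesis using in_J[OF True ab] in_J unfolding rees_def by simp
qed (simp add: rees_def)

lemma rees_model:
  assumes m: "model A f T" and J: "ideal A f J" and z: "z \<in> J"
  shows "model (rees J z ` A) (\<lambda>a b. rees J z (f a b)) T"
  by (rule hom_image_model[where h = "rees J z" and g = "\<lambda>a b. rees J z (f a b)", OF m])
    (simp_all add: rees_hom[OF modelD(1)[OF m] J z])

section \<open>Splitting a variety as the join of a nil-variety and some \<open>C\<^sub>k\<close>\<close>

definition nil_law :: "nat \<Rightarrow> ident" where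
  "nil_law m = (Mul (Var 0) (tpow (Var 1) (m - 1)), tpow (Var 1) (m - 1))"

text \<open>Under \<open>x y\<^sup>m = y\<^sup>m\<close> all \<open>m\<close>-th powers coincide and are a zero, so the variety is nil.\<close>
lemma nil_law_nilvar:
  assumes law: "nil_law m \<in> T"
  shows "nilvar T"
  unfolding nilvar_def
proof (intro allI impI)
  fix A f assume mo: "model A f T"
  have c: "is_csg A f" using modelD(1)[OF mo] .
  have absorb: "f a (apow f b (m - 1)) = apow f b (m - 1)" if "a \<in> A" "b \<in> A" for a b
    using satD[OF modelD(2)[OF mo law[unfolded nil_law_def]], of "\<lambda>i. if i = 0 then a else b"] that
    by (simp add: eval_tpow)
  have same: "apow f a (m - 1) = apow f b (m - 1)" if a: "a \<in> A" and b: "b \<in> A" for a b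
  proof -
    have p: "apow f a (m - 1) \<in> A" "apow f b (m - 1) \<in> A" using apow_in[OF c] a b by auto
    have "apow f b (m - 1) = f (apow f a (m - 1)) (apow f b (m - 1))" using absorb[OF p(1) b] by simp
    also have "\<dots> = f (apow f b (m - 1)) (apow f a (m - 1))" using csgD(4)[OF c p] .
    also have "\<dots> = apow f a (m - 1)" using absorb[OF p(2) a] .
    finally show ?thesis by simp
  qed
  obtain b where b: "b \<in> A" using csgD(1)[OF c] by blast
  show "is_nil A f" unfolding is_nil_def
  proof (intro bexI[of _ "apow f b (m - 1)"] conjI ballI)
    fix a assume a: "a \<in> A"
    show "f (apow f b (m - 1)) a = apow f b (m - 1)"
      using absorb[OF a b] csgD(4)[OF c a apow_in[OF c b]] by simp
    show "f a (apow f b (m - 1)) = apow f b (m - 1)" using absorb[OF a b] .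
    show "\<exists>n. apow f a n = apow f b (m - 1)" using same[OF a b] by blast
  qed (rule apow_in[OF c b])
qed

text \<open>In a semigroup of \<open>C\<^sub>m\<close> every \<open>x\<^sup>m\<close> is idempotent; the elements fixed by some \<open>x\<^sup>m\<close> form an
  ideal, the one to be collapsed in the Rees quotient below.\<close>
definition fixed_ideal :: "'a set \<Rightarrow> ('a \<Rightarrow> 'a \<Rightarrow> 'a) \<Rightarrow> nat \<Rightarrow> 'a set" where
  "fixed_ideal A f m = {a \<in> A. \<exists>x\<in>A. f (apow f x (m - 1)) a = a}"

context
  fixes A :: "'a set" and f :: "'a \<Rightarrow> 'a \<Rightarrow> 'a" and m :: nat
  assumes c: "is_csg A f" and m: "m \<ge> 1" and st: "pow_stable A f m"
begin

lemma apow_idem: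
  assumes x: "x \<in> A"
  shows "f (apow f x (m - 1)) (apow f x (m - 1)) = apow f x (m - 1)"
proof -
  have "f (apow f x (m - 1)) (apow f x (m - 1)) = apow f x (m - 1 + (m - 1) + 1)"
    by (rule apow_add[OF c x])
  also have "\<dots> = apow f x (m - 1)" by (rule apow_stable[OF st m x]) simp
  finally show ?thesis .
qed

lemma fixed_ideal_ideal: "ideal A f (fixed_ideal A f m)"
  unfolding ideal_def
proof (intro conjI ballI)
  fix a b assume a: "a \<in> fixed_ideal A f m" and b: "b \<in> A"
  then obtain x where x: "x \<in> A" "a \<in> A" "f (apow f x (m - 1)) a = a"
    unfolding fixed_ideal_def by blast
  have "f (apow f x (m - 1)) (f a b) = f a b"
    using csgD(3)[OF c apow_in[OF c x(1)] x(2) b, symmetric] x(3) by simp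
  then show "f a b \<in> fixed_ideal A f m"
    unfolding fixed_ideal_def using x csgD(2)[OF c x(2) b] by blast
qed (auto simp: fixed_ideal_def)

lemma apow_in_fixed_ideal: "x \<in> A \<Longrightarrow> apow f x (m - 1) \<in> fixed_ideal A f m"
  unfolding fixed_ideal_def using apow_in[OF c] apow_idem by blast

lemma fixed_ideal_separates:
  assumes z: "z \<in> fixed_ideal A f m" and ab: "a \<in> A" "b \<in> A"
    and rees: "rees (fixed_ideal A f m) z a = rees (fixed_ideal A f m) z b"
    and idem: "\<And>x. x \<in> A \<Longrightarrow> f (apow f x (m - 1)) a = f (apow f x (m - 1)) b"
  shows "a = b"
proof (cases "a \<in> fixed_ideal A f m")
  case False
  then show ?thesis using rees z unfolding rees_def by (auto split: if_splits)
next
  case True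
  then have "b \<in> fixed_ideal A f m" using rees z unfolding rees_def by (auto split: if_splits)
  then obtain x y where xy: "x \<in> A" "y \<in> A" "f (apow f x (m - 1)) a = a" "f (apow f y (m - 1)) b = b"
    using True unfolding fixed_ideal_def by blast
  let ?x = "apow f x (m - 1)" and ?y = "apow f y (m - 1)"
  have p: "?x \<in> A" "?y \<in> A" using apow_in[OF c] xy by auto
  have "a = f ?x b" using xy(3) idem[OF xy(1)] by simp
  also have "\<dots> = f ?x (f ?y b)" using xy(4) by simp
  also have "\<dots> = f ?y (f ?x b)"
    using csgD(3)[OF c p(1) p(2) ab(2)] csgD(3)[OF c p(2) p(1) ab(2)] csgD(4)[OF c p] by simp
  also have "\<dots> = f ?y (f ?x a)" using idem[OF xy(1)] by simp
  also have "\<dots> = b" using xy(3) idem[OF xy(2)] xy(4) by simp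
  finally show ?thesis .
qed

end

text \<open>Identities of the nil-variety \<open>V \<and> [x y\<^sup>m = y\<^sup>m]\<close> hold in a semigroup of \<open>V\<close> modulo its fixed
  ideal, because the Rees quotient lies in \<open>V\<close> and satisfies \<open>x y\<^sup>m = y\<^sup>m\<close>.\<close>
lemma rees_agree:
  fixes A :: "nat set"
  assumes mo: "model A f V" and m: "m \<ge> 1" and st: "pow_stable A f m"
    and z: "z \<in> fixed_ideal A f m" and st_law: "(s, t) \<in> closure (V \<union> {nil_law m})"
    and \<nu>: "\<And>i. \<nu> i \<in> A"
  shows "rees (fixed_ideal A f m) z (eval f \<nu> s) = rees (fixed_ideal A f m) z (eval f \<nu> t)"
proof -
  have c: "is_csg A f" using modelD(1)[OF mo] .
  define J where "J = fixed_ideal A f m"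
  define h where "h = rees J z"
  define g where "g a b = h (f a b)" for a b
  have J: "ideal A f J" and zJ: "z \<in> J" unfolding J_def using fixed_ideal_ideal[OF c m st] z by auto
  have hom: "h (f a b) = g (h a) (h b)" if "a \<in> A" "b \<in> A" for a b
    unfolding g_def h_def using rees_hom[OF c J zJ that] .
  have eval_h: "eval g (\<lambda>i. h (\<mu> i)) r = h (eval f \<mu> r)" if "\<And>i. \<mu> i \<in> A" for \<mu> r
    using hom_eval[where h = h and g = g, OF hom c] that by blast
  have B: "model (h ` A) g V" unfolding g_def h_def using rees_model[OF mo J zJ] .
  have "sat (h ` A) g (nil_law m)"
    unfolding nil_law_def
  proof (rule sat_I)
    fix \<mu> :: "nat \<Rightarrow> nat" assume \<mu>: "\<And>i. \<mu> i \<in> h ` A"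
    have zA: "z \<in> A" using J zJ unfolding ideal_def by blast
    have \<mu>A: "\<mu> i \<in> A" and \<mu>h: "h (\<mu> i) = \<mu> i" for i
      using \<mu>[of i] zA zJ unfolding h_def rees_def by auto
    have y: "apow f (\<mu> 1) (m - 1) \<in> J" using apow_in_fixed_ideal[OF c m st \<mu>A] unfolding J_def .
    moreover have "f (\<mu> 0) (apow f (\<mu> 1) (m - 1)) \<in> J"
      using J y apow_in[OF c \<mu>A] \<mu>A csgD(4)[OF c] unfolding ideal_def by metis
    moreover have evg: "eval g \<mu> r = h (eval f \<mu> r)" for r using eval_h[of \<mu> r] \<mu>A \<mu>h by simp
    ultimately show "eval g \<mu> (Mul (Var 0) (tpow (Var 1) (m - 1))) = eval g \<mu> (tpow (Var 1) (m - 1))"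
      unfolding evg by (simp add: eval_tpow h_def rees_def)
  qed
  then have "model (h ` A) g (V \<union> {nil_law m})" using B unfolding model_def by blast
  then have "model (h ` A) g (closure (V \<union> {nil_law m}))" by (rule model_closure)
  moreover have "h (\<nu> i) \<in> h ` A" for i using \<nu> by blast
  ultimately have "eval g (\<lambda>i. h (\<nu> i)) s = eval g (\<lambda>i. h (\<nu> i)) t"
    by (intro model_eq[OF _ st_law])
  then show ?thesis using eval_h[OF \<nu>] unfolding J_def h_def by simp
qed

text \<open>Identities of \<open>C\<^sub>k\<close> hold in a semigroup of \<open>V\<close> after multiplication by any idempotent \<open>x\<^sup>m\<close>,
  provided \<open>V\<close> has an identity in which some variable occurs exactly \<open>k\<close> times on the left and
  more often on the right: the retract \<open>x\<^sup>m A\<close> is a monoid of \<open>V\<close>, where that identity yields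
  \<open>a\<^sup>k = a\<^sup>k\<^sup>+\<^sup>1\<close>.\<close>
lemma retract_agree:
  fixes A :: "nat set"
  assumes mo: "model A f V" and m: "m \<ge> 1" and st: "pow_stable A f m" and x: "x \<in> A"
    and uv: "(u, v) \<in> V" "cnt i u = k" "k < cnt i v"
    and st_k: "(s, t) \<in> Cvar k" and \<nu>: "\<And>i. \<nu> i \<in> A"
  shows "f (apow f x (m - 1)) (eval f \<nu> s) = f (apow f x (m - 1)) (eval f \<nu> t)"
proof -
  have c: "is_csg A f" using modelD(1)[OF mo] .
  define z where "z = apow f x (m - 1)"
  define M where "M = (\<lambda>a. f z a) ` A"
  have zA: "z \<in> A" and idem: "f z z = z" unfolding z_def using apow_in[OF c x] apow_idem[OF c m st x] by auto
  have hom: "f z (f a b) = f (f z a) (f z b)" if "a \<in> A" "b \<in> A" for a b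
    using idem_retract_hom[OF c zA idem that] .
  have mM: "model M f V"
    by (rule hom_image_model[where h = "\<lambda>a. f z a" and g = f and B = M, OF mo hom M_def[symmetric]])
  have cM: "is_csg M f" using modelD(1)[OF mM] .
  have zM: "z \<in> M" unfolding M_def using zA idem by force
  have unit: "f z b = b" if "b \<in> M" for b using idem_retract_unit[OF c zA idem] that unfolding M_def .
  have stM: "pow_stable M f m" using st unfolding pow_stable_def M_def using csgD(2)[OF c zA] by auto
  have pw: "mpow f z b k = mpow f z b (Suc k)" if b: "b \<in> M" for b
  proof -
    have "eval f (\<lambda>j. if j = i then b else z) u = eval f (\<lambda>j. if j = i then b else z) v"
      using model_eq[OF mM uv(1)] b zM by simp
    then have "mpow f z b k = mpow f z b (cnt i v)" using eval_one_var[OF cM zM unit b] uv(2) by simp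
    then show ?thesis using mpow_eq_step[OF cM zM unit stM m b _ uv(3)] by blast
  qed
  have "f z (\<nu> j) \<in> M" for j unfolding M_def using \<nu> by blast
  then have "eval f (\<lambda>j. f z (\<nu> j)) s = eval f (\<lambda>j. f z (\<nu> j)) t"
    by (intro monoid_sat_Cvar[where M = M and f = f and e = z, OF cM zM unit pw st_k])
  then show ?thesis using hom_eval[where h = "f z" and g = f, OF hom c] \<nu> unfolding z_def by simp
qed

lemma Cvar_join_split:
  assumes cV: "cvar V" and m: "m \<ge> 1" and CmV: "Cvar m \<subseteq> V" and Vk: "V \<subseteq> Cvar k"
    and uv: "(u, v) \<in> V" "cnt i u = k" "k < cnt i v"
  shows "V = vjoin (closure (V \<union> {nil_law m})) (Cvar k)"
proof -
  have "(s, t) \<in> V" if st: "(s, t) \<in> closure (V \<union> {nil_law m})" "(s, t) \<in> Cvar k" for s t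
  proof (rule cvar_member[OF cV], rule sat_I)
    fix A f and \<nu> :: "nat \<Rightarrow> nat" assume mo: "model A f V" and \<nu>: "\<And>i. \<nu> i \<in> A"
    have c: "is_csg A f" using modelD(1)[OF mo] .
    have stA: "pow_stable A f m" using model_Cvar[OF m] model_mono[OF mo CmV] by blast
    obtain x0 where "x0 \<in> A" using csgD(1)[OF c] by blast
    then have z: "apow f x0 (m - 1) \<in> fixed_ideal A f m" by (rule apow_in_fixed_ideal[OF c m stA])
    show "eval f \<nu> s = eval f \<nu> t"
      by (rule fixed_ideal_separates[OF c m stA z eval_in[OF c \<nu>] eval_in[OF c \<nu>]
          rees_agree[OF mo m stA z st(1) \<nu>] retract_agree[OF mo m stA _ uv st(2) \<nu>]])
  qed
  then show ?thesis using closure_incr[of "V \<union> {nil_law m}"] Vk unfolding vjoin_def by auto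
qed

lemma Cvar_gap_identity:
  assumes cV: "cvar V" and Vk: "V \<subseteq> Cvar k" and not: "\<not> V \<subseteq> Cvar (Suc k)"
  obtains u v i where "(u, v) \<in> V" "cnt i u = k" "k < cnt i v"
proof -
  obtain u v where uv: "(u, v) \<in> V" "(u, v) \<notin> Cvar (Suc k)" using not by auto
  then obtain i where ne: "min (Suc k) (cnt i u) \<noteq> min (Suc k) (cnt i v)"
    using Cvar_iff[of "Suc k" u v] by auto
  have eq: "min k (cnt i u) = min k (cnt i v)" using Cvar_trunc Vk uv(1) by blast
  have "(cnt i u = k \<and> k < cnt i v) \<or> (cnt i v = k \<and> k < cnt i u)"
    using ne eq by (auto simp: min_def split: if_splits)
  then show thesis using that uv(1) cvar_sym[OF cV uv(1)] by blast
qed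

text \<open>Converse direction: a combinatorial variety satisfies \<open>x\<^sup>m = x\<^sup>m\<^sup>+\<^sup>1\<close> for some \<open>m\<close>; for the largest
  \<open>k \<le> m\<close> with \<open>C\<^sub>k \<subseteq> V\<close>, either \<open>k = m\<close> and \<open>V = C\<^sub>m\<close>, or \<open>V\<close> splits off a nil-variety with
  complement \<open>C\<^sub>k\<close>, and irreducibility gives \<open>V = C\<^sub>k\<close>.\<close>
lemma irreducible_combinatorial_Cvar:
  assumes cV: "cvar V" and comb: "combinatorial V"
    and irr: "\<forall>Y Z. cvar Y \<and> cvar Z \<and> nilvar Y \<and> V = vjoin Y Z \<longrightarrow> V = Z"
  shows "\<exists>m. V = Cvar m"
proof -
  obtain p where "powers_eq V p (Suc p)" using combinatorial_periodic[OF cV comb] by blast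
  then have CmV: "Cvar (Suc p) \<subseteq> V"
    using closure_mono[of _ V] cV unfolding powers_eq_def Cvar_def cvar_def by auto
  define S where "S = {j. j \<le> Suc p \<and> V \<subseteq> Cvar j}"
  define k where "k = Max S"
  have S: "finite S" "0 \<in> S" unfolding S_def by (auto simp: Cvar_def)
  then have "k \<in> S" unfolding k_def by (intro Max_in) auto
  then have k: "k \<le> Suc p" "V \<subseteq> Cvar k" unfolding S_def by auto
  have k_max: "j \<le> k" if "j \<in> S" for j unfolding k_def using Max_ge[OF S(1) that] .
  show ?thesis
  proof (cases "k = Suc p")
    case False
    then have "\<not> V \<subseteq> Cvar (Suc k)" using k_max[of "Suc k"] k(1) unfolding S_def by auto
    then obtain u v i where uv: "(u, v) \<in> V" "cnt i u = k" "k < cnt i v"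
      using Cvar_gap_identity[OF cV k(2)] by blast
    have "V = vjoin (closure (V \<union> {nil_law (Suc p)})) (Cvar k)"
      using Cvar_join_split[OF cV _ CmV k(2) uv] by simp
    moreover have "nilvar (closure (V \<union> {nil_law (Suc p)}))"
      using nil_law_nilvar closure_incr by blast
    ultimately show ?thesis using irr cvar_closure Cvar_cvar by blast
  qed (use k CmV in blast)
qed

theorem mainTheorem7:
  assumes "cvar V"
  shows "(\<exists>m. V = Cvar m) \<longleftrightarrow>
    (combinatorial V \<and>
     (\<forall>Y Z. cvar Y \<and> cvar Z \<and> nilvar Y \<and> V = vjoin Y Z \<longrightarrow> V = Z))"
  using Cvar_combinatorial Cvar_nil_join irreducible_combinatorial_Cvar[OF assms] by blast

end
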